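(* Let $G$ be a connected graph in $\mathcal{C}$. If $G$ contains an induced cycle of length 7, then $G$ has at most 21 vertices.
   Context: $\mathcal{C}=\mathrm{Free}(\text{claw}, 4K_1, \text{5-wheel}, C_5\text{-twin}, P_5\text{-twin}, K_5-e)$, where $\mathrm{Free}(L)$ is the class of graphs with no induced subgraph isomorphic to a member of $L$; the claw is $K_{1,3}$; $4K_1$ is the edgeless graph on 4 vertices; the 5-wheel is $C_5$ plus a vertex adjacent to all five cycle vertices; the $C_5$-twin is $C_5$ plus a new vertex adjacent to one cycle vertex $v$ and both cycle-neighbours of $v$; the $P_5$-twin is a path $p_1p_2p_3p_4p_5$ plus a new vertex adjacent to exactly $p_2,p_3,p_4$; $K_5-e$ is $K_5$ minus one edge. *)

theory Defs
  imports Main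
begin

definition sgraph :: "'a set \<Rightarrow> ('a \<Rightarrow> 'a \<Rightarrow> bool) \<Rightarrow> bool" where
  "sgraph V E \<longleftrightarrow> finite V \<and> (\<forall>x y. E x y \<longrightarrow> x \<in> V \<and> y \<in> V)
     \<and> (\<forall>x y. E x y \<longrightarrow> E y x) \<and> (\<forall>x. \<not> E x x)"

definition connected_graph :: "'a set \<Rightarrow> ('a \<Rightarrow> 'a \<Rightarrow> bool) \<Rightarrow> bool" where
  "connected_graph V E \<longleftrightarrow>
     (\<forall>u\<in>V. \<forall>v\<in>V. (\<lambda>x y. x \<in> V \<and> y \<in> V \<and> E x y)\<^sup>*\<^sup>* u v)"

definition has_induced :: "'a set \<Rightarrow> ('a \<Rightarrow> 'a \<Rightarrow> bool) \<Rightarrow> nat \<Rightarrow> (nat \<Rightarrow> nat \<Rightarrow> bool) \<Rightarrow> bool" where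
  "has_induced V E n A \<longleftrightarrow> (\<exists>f. inj_on f {0..<n} \<and> f ` {0..<n} \<subseteq> V \<and>
     (\<forall>i\<in>{0..<n}. \<forall>j\<in>{0..<n}. E (f i) (f j) \<longleftrightarrow> A i j))"

definition cycle_adj :: "nat \<Rightarrow> nat \<Rightarrow> nat \<Rightarrow> bool" where
  "cycle_adj k i j \<longleftrightarrow> j = (i + 1) mod k \<or> i = (j + 1) mod k"

definition claw_adj :: "nat \<Rightarrow> nat \<Rightarrow> bool" where
  "claw_adj i j \<longleftrightarrow> i \<noteq> j \<and> (i = 0 \<or> j = 0)"

definition empty_adj :: "nat \<Rightarrow> nat \<Rightarrow> bool" where
  "empty_adj i j \<longleftrightarrow> False"

definition wheel5_adj :: "nat \<Rightarrow> nat \<Rightarrow> bool" where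
  "wheel5_adj i j \<longleftrightarrow> (i < 5 \<and> j < 5 \<and> cycle_adj 5 i j) \<or> (i \<noteq> j \<and> (i = 5 \<or> j = 5))"

definition c5twin_adj :: "nat \<Rightarrow> nat \<Rightarrow> bool" where
  "c5twin_adj i j \<longleftrightarrow> (i < 5 \<and> j < 5 \<and> cycle_adj 5 i j)
     \<or> (i = 5 \<and> j \<in> {0, 1, 4}) \<or> (j = 5 \<and> i \<in> {0, 1, 4})"

definition p5twin_adj :: "nat \<Rightarrow> nat \<Rightarrow> bool" where
  "p5twin_adj i j \<longleftrightarrow> (i < 5 \<and> j < 5 \<and> (j = i + 1 \<or> i = j + 1))
     \<or> (i = 5 \<and> j \<in> {1, 2, 3}) \<or> (j = 5 \<and> i \<in> {1, 2, 3})"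

definition k5e_adj :: "nat \<Rightarrow> nat \<Rightarrow> bool" where
  "k5e_adj i j \<longleftrightarrow> i \<noteq> j \<and> {i, j} \<noteq> {0, 1}"

definition in_class_C :: "'a set \<Rightarrow> ('a \<Rightarrow> 'a \<Rightarrow> bool) \<Rightarrow> bool" where
  "in_class_C V E \<longleftrightarrow>
     \<not> has_induced V E 4 claw_adj \<and>
     \<not> has_induced V E 4 empty_adj \<and>
     \<not> has_induced V E 6 wheel5_adj \<and>
     \<not> has_induced V E 6 c5twin_adj \<and>
     \<not> has_induced V E 6 p5twin_adj \<and>
     \<not> has_induced V E 5 k5e_adj"

end

theory Submission
  imports Defs
begin

text \<open>Fix an induced 7-cycle \<open>C\<close>. A vertex outside \<open>C\<close> is described by its attachment, the
  set of cycle positions it is adjacent to. Freedom from claws, \<open>4K\<^sub>1\<close> and \<open>P\<^sub>5\<close>-twins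
  leaves only 14 possible attachments: four consecutive cycle vertices, or two pairs of
  consecutive ones separated by a single vertex. Two distinct outside vertices with the same
  attachment would span a claw (if non-adjacent) or a \<open>P\<^sub>5\<close>- or \<open>C\<^sub>5\<close>-twin (if adjacent).
  Hence the attachment map is injective outside \<open>C\<close>, and \<open>|V| \<le> 7 + 14\<close>. Both finite case
  distinctions are decided by evaluation on the concrete graphs on \<open>{0..<8}\<close> and \<open>{0..<9}\<close>.\<close>

definition induced_embedding ::
    "'a set \<Rightarrow> ('a \<Rightarrow> 'a \<Rightarrow> bool) \<Rightarrow> nat \<Rightarrow> (nat \<Rightarrow> nat \<Rightarrow> bool) \<Rightarrow> (nat \<Rightarrow> 'a) \<Rightarrow> bool" where
  "induced_embedding V E n A f \<longleftrightarrow> inj_on f {0..<n} \<and> f ` {0..<n} \<subseteq> V \<and>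
     (\<forall>i\<in>{0..<n}. \<forall>j\<in>{0..<n}. E (f i) (f j) \<longleftrightarrow> A i j)"

lemma has_induced_iff_induced_embedding:
  "has_induced V E n A \<longleftrightarrow> (\<exists>f. induced_embedding V E n A f)"
  unfolding has_induced_def induced_embedding_def ..

lemma has_induced_trans:
  assumes "has_induced V E m B" and "has_induced {0..<m} B n A"
  shows "has_induced V E n A"
proof -
  obtain f where f: "inj_on f {0..<m}" "f ` {0..<m} \<subseteq> V"
    and f_adj: "\<forall>i\<in>{0..<m}. \<forall>j\<in>{0..<m}. E (f i) (f j) \<longleftrightarrow> B i j"
    using assms(1) unfolding has_induced_def by blast
  obtain g where g: "inj_on g {0..<n}" "g ` {0..<n} \<subseteq> {0..<m}"
    and g_adj: "\<forall>i\<in>{0..<n}. \<forall>j\<in>{0..<n}. B (g i) (g j) \<longleftrightarrow> A i j"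
    using assms(2) unfolding has_induced_def by blast
  have "inj_on (f \<circ> g) {0..<n}"
    using g f by (blast intro: comp_inj_on inj_on_subset)
  moreover have "(f \<circ> g) ` {0..<n} \<subseteq> V"
    using g(2) f(2) by auto
  moreover have "\<forall>i\<in>{0..<n}. \<forall>j\<in>{0..<n}. E ((f \<circ> g) i) ((f \<circ> g) j) \<longleftrightarrow> A i j"
  proof (intro ballI)
    fix i j assume ij: "i \<in> {0..<n}" "j \<in> {0..<n}"
    then have "g i \<in> {0..<m}" "g j \<in> {0..<m}"
      using g(2) by (auto simp: image_subset_iff)
    then show "E ((f \<circ> g) i) ((f \<circ> g) j) \<longleftrightarrow> A i j"
      using f_adj g_adj ij by simp
  qed
  ultimately show ?thesis
    unfolding has_induced_def by blast
qed

definition attachment :: "('a \<Rightarrow> 'a \<Rightarrow> bool) \<Rightarrow> (nat \<Rightarrow> 'a) \<Rightarrow> nat \<Rightarrow> 'a \<Rightarrow> nat set" where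
  "attachment E f n v = {i. i < n \<and> E v (f i)}"

definition extend_pattern :: "nat \<Rightarrow> (nat \<Rightarrow> nat \<Rightarrow> bool) \<Rightarrow> nat set \<Rightarrow> nat \<Rightarrow> nat \<Rightarrow> bool" where
  "extend_pattern n A S i j \<longleftrightarrow> (i < n \<and> j < n \<and> A i j) \<or> (i = n \<and> j \<in> S) \<or> (j = n \<and> i \<in> S)"

lemma induced_embedding_extend:
  assumes "sgraph V E" and f: "induced_embedding V E n A f"
    and v: "v \<in> V" "v \<notin> f ` {0..<n}"
  shows "induced_embedding V E (Suc n) (extend_pattern n A (attachment E f n v)) (f(n := v))"
proof -
  have sym: "\<And>x y. E x y \<Longrightarrow> E y x" and irrefl: "\<And>x. \<not> E x x"
    using assms(1) unfolding sgraph_def by auto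
  have "inj_on (f(n := v)) {0..<Suc n}"
    using f v unfolding induced_embedding_def inj_on_def by (auto simp: less_Suc_eq)
  moreover have "(f(n := v)) ` {0..<Suc n} \<subseteq> V"
    using f v unfolding induced_embedding_def by (auto simp: less_Suc_eq)
  moreover have "E ((f(n := v)) i) ((f(n := v)) j) \<longleftrightarrow>
      extend_pattern n A (attachment E f n v) i j" if "i < Suc n" "j < Suc n" for i j
    using that f sym irrefl
    unfolding induced_embedding_def extend_pattern_def attachment_def
    by (auto simp: less_Suc_eq)
  ultimately show ?thesis
    unfolding induced_embedding_def by auto
qed

datatype obstruction = Claw | Indep4 | C5_Twin | P5_Twin

fun obstruction_size :: "obstruction \<Rightarrow> nat" where
  "obstruction_size Claw = 4"
| "obstruction_size Indep4 = 4"
| "obstruction_size C5_Twin = 6"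
| "obstruction_size P5_Twin = 6"

fun obstruction_graph :: "obstruction \<Rightarrow> nat \<Rightarrow> nat \<Rightarrow> bool" where
  "obstruction_graph Claw = claw_adj"
| "obstruction_graph Indep4 = empty_adj"
| "obstruction_graph C5_Twin = c5twin_adj"
| "obstruction_graph P5_Twin = p5twin_adj"

lemma in_class_C_obstruction_free:
  "in_class_C V E \<Longrightarrow> \<not> has_induced V E (obstruction_size ob) (obstruction_graph ob)"
  by (cases ob) (simp_all add: in_class_C_def)

definition induced_list ::
    "nat set \<Rightarrow> (nat \<Rightarrow> nat \<Rightarrow> bool) \<Rightarrow> nat \<Rightarrow> (nat \<Rightarrow> nat \<Rightarrow> bool) \<Rightarrow> nat list \<Rightarrow> bool" where
  "induced_list W H n A xs \<longleftrightarrow> length xs = n \<and> distinct xs \<and> set xs \<subseteq> W \<and>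
     (\<forall>i<n. \<forall>j<n. H (xs ! i) (xs ! j) = A i j)"

lemma has_induced_if_induced_list:
  assumes "induced_list W H n A xs"
  shows "has_induced W H n A"
  unfolding has_induced_def
proof (intro exI conjI)
  show "inj_on ((!) xs) {0..<n}"
    using assms unfolding induced_list_def by (auto simp: inj_on_def nth_eq_iff_index_eq)
  show "(!) xs ` {0..<n} \<subseteq> W"
    using assms unfolding induced_list_def by auto
  show "\<forall>i\<in>{0..<n}. \<forall>j\<in>{0..<n}. H (xs ! i) (xs ! j) \<longleftrightarrow> A i j"
    using assms unfolding induced_list_def by auto
qed

definition exhibits :: "nat set \<Rightarrow> (nat \<Rightarrow> nat \<Rightarrow> bool) \<Rightarrow> obstruction \<times> nat list \<Rightarrow> bool" where
  "exhibits W H c \<longleftrightarrow> induced_list W H (obstruction_size (fst c)) (obstruction_graph (fst c)) (snd c)"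

lemma no_exhibited_obstruction:
  assumes "in_class_C V E" and "induced_embedding V E N H g" and "exhibits {0..<N} H c"
  shows False
proof -
  have "has_induced {0..<N} H (obstruction_size (fst c)) (obstruction_graph (fst c))"
    using assms(3) unfolding exhibits_def by (rule has_induced_if_induced_list)
  with assms(2) have "has_induced V E (obstruction_size (fst c)) (obstruction_graph (fst c))"
    by (blast intro: has_induced_trans has_induced_iff_induced_embedding[THEN iffD2])
  with assms(1) show False
    using in_class_C_obstruction_free by blast
qed

definition rotate_C7 :: "nat \<Rightarrow> nat set \<Rightarrow> nat set" where
  "rotate_C7 r S = (\<lambda>k. (r + k) mod 7) ` S"

definition admissible_attachments :: "nat set set" where
  "admissible_attachments = (\<Union>r<7. {rotate_C7 r {0, 1, 2, 3}, rotate_C7 r {0, 1, 3, 4}})"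

lemma finite_admissible_attachments: "finite admissible_attachments"
  unfolding admissible_attachments_def by simp

lemma card_admissible_attachments: "card admissible_attachments \<le> 14"
proof -
  have "card admissible_attachments \<le> (\<Sum>r<7. card {rotate_C7 r {0, 1, 2, 3}, rotate_C7 r {0, 1, 3, 4}})"
    unfolding admissible_attachments_def by (rule card_UN_le) simp
  also have "\<dots> \<le> (\<Sum>r<(7::nat). 2)"
    by (intro sum_mono) (simp add: card_insert_le_m1)
  finally show ?thesis by simp
qed

text \<open>The cycle occupies \<open>0..6\<close>, the outside vertex is \<open>7\<close>. Rotating by \<open>r\<close>, the candidates are:
  a claw at a cycle vertex of the attachment with neither cycle neighbour in it; a claw at \<open>7\<close>
  with three independent cycle neighbours; a \<open>4K\<^sub>1\<close> from three independent non-neighbours; and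
  a \<open>P\<^sub>5\<close>-twin when the attachment contains a maximal run of exactly three cycle vertices.\<close>
definition single_obstructions :: "(obstruction \<times> nat list) list" where
  "single_obstructions = concat (map (\<lambda>r. let c = (\<lambda>k. (r + k) mod 7) in
     [(Claw, [c 0, c 6, c 1, 7]), (Claw, [7, c 0, c 2, c 4]), (Indep4, [c 0, c 2, c 4, 7]),
      (P5_Twin, [c 6, c 0, c 1, c 2, c 3, 7])]) [0..<7])"

text \<open>Two outside vertices \<open>7\<close> and \<open>8\<close> with the same attachment: a claw at a cycle vertex \<open>c 0\<close> of
  the attachment whose cycle neighbour \<open>c 1\<close> lies outside it (or vice versa) when \<open>7, 8\<close> are
  non-adjacent; a \<open>P\<^sub>5\<close>-twin (four-run attachments) or \<open>C\<^sub>5\<close>-twin (split attachments) otherwise.\<close>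
definition twin_obstructions :: "(obstruction \<times> nat list) list" where
  "twin_obstructions = concat (map (\<lambda>r. let c = (\<lambda>k. (r + k) mod 7) in
     [(Claw, [c 0, c 1, 7, 8]), (Claw, [c 1, c 0, 7, 8]),
      (P5_Twin, [c 4, c 3, 7, c 0, c 6, 8]), (C5_Twin, [7, c 0, c 6, c 5, c 4, 8])]) [0..<7])"

lemma single_extensions_of_C7:
  "\<forall>S \<in> Pow {0..<7}. S \<in> admissible_attachments \<or>
     (\<exists>c \<in> set single_obstructions. exhibits {0..<8} (extend_pattern 7 (cycle_adj 7) S) c)"
  by code_simp

lemma twin_extensions_of_C7:
  "\<forall>S \<in> admissible_attachments. \<forall>e \<in> {True, False}. \<exists>c \<in> set twin_obstructions.
     exhibits {0..<9} (extend_pattern 8 (extend_pattern 7 (cycle_adj 7) S) (if e then insert 7 S else S)) c"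
  by code_simp

lemma attachment_admissible:
  assumes "sgraph V E" and "in_class_C V E" and f: "induced_embedding V E 7 (cycle_adj 7) f"
    and v: "v \<in> V - f ` {0..<7}"
  shows "attachment E f 7 v \<in> admissible_attachments"
proof (rule ccontr)
  let ?S = "attachment E f 7 v"
  assume "?S \<notin> admissible_attachments"
  moreover have "?S \<in> Pow {0..<7}"
    unfolding attachment_def by auto
  ultimately obtain c where "exhibits {0..<8} (extend_pattern 7 (cycle_adj 7) ?S) c"
    using single_extensions_of_C7 by blast
  moreover have "induced_embedding V E 8 (extend_pattern 7 (cycle_adj 7) ?S) (f(7 := v))"
    using induced_embedding_extend[OF assms(1) f] v by (simp add: numeral_eq_Suc)
  ultimately show False
    using no_exhibited_obstruction assms(2) by blast
qed

lemma attachment_inj_on: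
  assumes G: "sgraph V E" and "in_class_C V E" and f: "induced_embedding V E 7 (cycle_adj 7) f"
  shows "inj_on (attachment E f 7) (V - f ` {0..<7})"
proof (rule inj_onI, rule ccontr)
  fix u w
  assume u: "u \<in> V - f ` {0..<7}" and w: "w \<in> V - f ` {0..<7}" and "u \<noteq> w"
    and same: "attachment E f 7 u = attachment E f 7 w"
  define S where "S = attachment E f 7 u"
  define B where "B = extend_pattern 7 (cycle_adj 7) S"
  define g where "g = f(7 := u)"
  have g: "induced_embedding V E 8 B g"
    using induced_embedding_extend[OF G f] u by (simp add: B_def S_def g_def numeral_eq_Suc)
  have "{0..<8::nat} = insert 7 {0..<7}"
    by auto
  then have "w \<notin> g ` {0..<8}"
    using w \<open>u \<noteq> w\<close> by (auto simp: g_def)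
  then have emb: "induced_embedding V E 9 (extend_pattern 8 B (attachment E g 8 w)) (g(8 := w))"
    using induced_embedding_extend[OF G g] w by (simp add: numeral_eq_Suc)
  have "attachment E g 8 w = (if E u w then insert 7 S else S)"
  proof (rule set_eqI)
    fix i
    have "E w u \<longleftrightarrow> E u w"
      using G unfolding sgraph_def by blast
    moreover have "i < 7 \<Longrightarrow> E w (f i) \<longleftrightarrow> E u (f i)"
      using same unfolding attachment_def by blast
    moreover have "i < 8 \<longleftrightarrow> i < 7 \<or> i = 7"
      by linarith
    ultimately show "i \<in> attachment E g 8 w \<longleftrightarrow> i \<in> (if E u w then insert 7 S else S)"
      unfolding S_def attachment_def g_def by (cases "i = 7") auto
  qed
  moreover have "S \<in> admissible_attachments"
    unfolding S_def using attachment_admissible[OF assms u] .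
  ultimately obtain c where "exhibits {0..<9} (extend_pattern 8 B (attachment E g 8 w)) c"
    using twin_extensions_of_C7[rule_format, of S "E u w"] unfolding B_def by auto
  then show False
    using no_exhibited_obstruction[OF assms(2) emb] by blast
qed

theorem claim2:
  fixes V :: "'a set" and E :: "'a \<Rightarrow> 'a \<Rightarrow> bool"
  assumes "sgraph V E"
    and "connected_graph V E"
    and "in_class_C V E"
    and "has_induced V E 7 (cycle_adj 7)"
  shows "card V \<le> 21"
proof -
  obtain f where f: "induced_embedding V E 7 (cycle_adj 7) f"
    using assms(4) has_induced_iff_induced_embedding by blast
  let ?C = "f ` {0..<7}"
  have "card (V - ?C) \<le> card admissible_attachments"
    using attachment_inj_on[OF assms(1,3) f] attachment_admissible[OF assms(1,3) f]
    by (intro card_inj_on_le finite_admissible_attachments) auto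
  moreover have "card ?C = 7"
    using f unfolding induced_embedding_def by (simp add: card_image)
  moreover have "card (V - ?C) = card V - card ?C" and "card ?C \<le> card V"
  proof -
    have "finite V" and "?C \<subseteq> V"
      using assms(1) f unfolding sgraph_def induced_embedding_def by simp_all
    then show "card (V - ?C) = card V - card ?C" and "card ?C \<le> card V"
      by (simp_all add: card_Diff_subset card_mono finite_subset)
  qed
  ultimately show ?thesis
    using card_admissible_attachments by linarith
qed

end
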